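(* Let $f(x;w)$ be a vanilla fully connected ReLU network, a ResNet, or a DenseNet with i.i.d. standard normal weights, let $x\neq0$, let $W^{\mathbf{k}}$ be any weight matrix of $f$, and let $p>0$. Then $$\mathbb{E}\big[\|J^{\mathbf{k}}\|_2^p\big]=\mathbb{E}\left[\left\|\frac{\partial f_{\mathbf{k}}(x;w)}{\partial W^{\mathbf{k}}}\right\|_2^p\right],$$ where $J^{\mathbf{k}}=\frac{\partial f(x;w)}{\partial W^{\mathbf{k}}}$ and $\|\cdot\|_2$ is the Frobenius norm.
   Context: $\phi(t)=\max(0,t)$. Vanilla: $y^0=\frac{1}{\sqrt{n_0}}W^0x$, $y^l=\sqrt2\phi(\frac{1}{\sqrt{n_{l-1}}}W^ly^{l-1})$, $f=\frac{1}{\sqrt{n_L}}W^{L+1}y^L$. ResNet: $y^0=\frac{1}{\sqrt{n_0}}W^0x$; $y^l=y^{l-1}+\sqrt{\alpha_l}\,y^{l-1,m}$ with $y^{l-1,1}=\frac{1}{\sqrt{n_{l-1}}}W^{l,1}y^{l-1}$, $y^{l-1,h}=\frac{1}{\sqrt{n_{l-1,h-1}}}W^{l,h}q^{l-1,h-1}$ ($1<h\le m$), $q^{l-1,h}=\sqrt2\phi(y^{l-1,h})$, $\alpha_l>0$; $f=\frac{1}{\sqrt{n_L}}W^Ly^L$. DenseNet: $y^0=\frac{1}{\sqrt{n_0}}W^0x$, $y^l=\sqrt{\frac{\alpha}{n_{l-1}l}}\sum_{h=0}^{l-1}W^{l,h}q^h$, $q^h=\sqrt2\phi(y^h)$, $\alpha>0$;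 $f=\frac{1}{\sqrt{n_L}}W^Ly^L$. Dimensions compatible. Path decomposition: $f(x;w)=\sum_{\gamma\in S}c_\gamma z_\gamma\prod_{l=1}^{|\gamma|}w_{\gamma,l}$, where $S$ is the set of input-to-output paths in the computation graph, $w_{\gamma,l}$ the weights along $\gamma$, $c_\gamma$ the constant factors, and $z_\gamma\in\{0,1\}$ the indicator that all ReLUs along $\gamma$ are active at $(x,w)$. With $S_{\mathbf{k}}$ the paths using a weight of $W^{\mathbf{k}}$, $f_{\mathbf{k}}(x;w)=\sum_{\gamma\in S_{\mathbf{k}}}c_\gamma z_\gamma\prod_l w_{\gamma,l}$. Derivatives are taken where they exist (almost everywhere). *)

theory Defs
  imports "HOL-Probability.Probability"
begin

text \<open>Stages are numbered 0,1,...; stage 0 holds the input x, stage nst is the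
 scalar output (coordinate 0).  Each stage s has width dim s; if act s holds, the
 stage feeds its successors through q = sqrt 2 * max 0 y (a ReLU unit), otherwise
 it feeds its raw value.  Weight matrices W^k (k in mats) map stage msrc k to stage
 mdst k with scalar constant mcoef k; W^k has dim (mdst k) rows and dim (msrc k)
 columns.  Skip connections (s,t,c) add c times the output of stage s to stage t.\<close>

record 'k net =
  nst :: nat
  dim :: "nat \<Rightarrow> nat"
  act :: "nat \<Rightarrow> bool"
  mats :: "'k set"
  msrc :: "'k \<Rightarrow> nat"
  mdst :: "'k \<Rightarrow> nat"
  mcoef :: "'k \<Rightarrow> real"
  skips :: "(nat \<times> nat \<times> real) list"

text \<open>Weights: w (k,j,i) is entry (j,i) of W^k.\<close>
type_synonym 'k weights = "'k \<times> nat \<times> nat \<Rightarrow> real"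

definition relu :: "real \<Rightarrow> real" where "relu t = max 0 t"

definition stage_out :: "'k net \<Rightarrow> (nat \<Rightarrow> nat \<Rightarrow> real) \<Rightarrow> nat \<Rightarrow> nat \<Rightarrow> real" where
  "stage_out N v s i = (if act N s then sqrt 2 * relu (v s i) else v s i)"

definition stage_lin :: "'k net \<Rightarrow> 'k weights \<Rightarrow> (nat \<Rightarrow> nat \<Rightarrow> real) \<Rightarrow> nat \<Rightarrow> nat \<Rightarrow> real" where
  "stage_lin N w ov t j =
     (\<Sum>k\<in>mats N. if mdst N k = t \<and> msrc N k < t
        then mcoef N k * (\<Sum>i<dim N (msrc N k). w (k, j, i) * ov (msrc N k) i) else 0)
   + (\<Sum>(s, t', c)\<leftarrow>skips N. if t' = t \<and> s < t then c * ov s j else 0)"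

text \<open>vals N x w t s j is the (pre-activation) value of coordinate j of stage s,
 correct for all s \<le> t.\<close>
primrec vals :: "'k net \<Rightarrow> (nat \<Rightarrow> real) \<Rightarrow> 'k weights \<Rightarrow> nat \<Rightarrow> nat \<Rightarrow> nat \<Rightarrow> real" where
  "vals N x w 0 = (\<lambda>s j. x j)"
| "vals N x w (Suc t) = (\<lambda>s j. if s = Suc t
      then stage_lin N w (stage_out N (vals N x w t)) (Suc t) j
      else vals N x w t s j)"

definition node_val :: "'k net \<Rightarrow> (nat \<Rightarrow> real) \<Rightarrow> 'k weights \<Rightarrow> nat \<Rightarrow> nat \<Rightarrow> real" where
  "node_val N x w s j = vals N x w s s j"

definition net_out :: "'k net \<Rightarrow> (nat \<Rightarrow> real) \<Rightarrow> 'k weights \<Rightarrow> real" where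
  "net_out N x w = node_val N x w (nst N) 0"

text \<open>WE k j i: the edge carrying weight entry (j,i) of W^k, from node (msrc k, i)
 to node (mdst k, j).  SE r c: the r-th skip connection at coordinate c.\<close>
datatype 'k edge = WE 'k nat nat | SE nat nat

fun esrc :: "'k net \<Rightarrow> 'k edge \<Rightarrow> nat \<times> nat" where
  "esrc N (WE k j i) = (msrc N k, i)"
| "esrc N (SE r c) = (fst (skips N ! r), c)"

fun edst :: "'k net \<Rightarrow> 'k edge \<Rightarrow> nat \<times> nat" where
  "edst N (WE k j i) = (mdst N k, j)"
| "edst N (SE r c) = (fst (snd (skips N ! r)), c)"

fun ecoef :: "'k net \<Rightarrow> 'k edge \<Rightarrow> real" where
  "ecoef N (WE k j i) = mcoef N k"
| "ecoef N (SE r c) = snd (snd (skips N ! r))"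

fun eweight :: "'k weights \<Rightarrow> 'k edge \<Rightarrow> real" where
  "eweight w (WE k j i) = w (k, j, i)"
| "eweight w (SE r c) = 1"

fun edge_ok :: "'k net \<Rightarrow> 'k edge \<Rightarrow> bool" where
  "edge_ok N (WE k j i) \<longleftrightarrow> k \<in> mats N \<and> j < dim N (mdst N k) \<and> i < dim N (msrc N k)
      \<and> msrc N k < mdst N k"
| "edge_ok N (SE r c) \<longleftrightarrow> r < length (skips N) \<and> c < dim N (fst (skips N ! r))
      \<and> c < dim N (fst (snd (skips N ! r))) \<and> fst (skips N ! r) < fst (snd (skips N ! r))"

definition is_path :: "'k net \<Rightarrow> 'k edge list \<Rightarrow> bool" where
  "is_path N \<gamma> \<longleftrightarrow> \<gamma> \<noteq> [] \<and> (\<forall>e\<in>set \<gamma>. edge_ok N e)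
     \<and> fst (esrc N (hd \<gamma>)) = 0 \<and> edst N (last \<gamma>) = (nst N, 0)
     \<and> (\<forall>i. Suc i < length \<gamma> \<longrightarrow> edst N (\<gamma> ! i) = esrc N (\<gamma> ! Suc i))"

definition inner_nodes :: "'k net \<Rightarrow> 'k edge list \<Rightarrow> (nat \<times> nat) list" where
  "inner_nodes N \<gamma> = map (edst N) (butlast \<gamma>)"

text \<open>Constant factor c_gamma (includes the input coordinate and the sqrt 2 of each
 ReLU unit), activation indicator z_gamma, and the product of the weights.\<close>
definition path_const :: "'k net \<Rightarrow> (nat \<Rightarrow> real) \<Rightarrow> 'k edge list \<Rightarrow> real" where
  "path_const N x \<gamma> = x (snd (esrc N (hd \<gamma>))) * (\<Prod>e\<leftarrow>\<gamma>. ecoef N e)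
     * (\<Prod>(s, j)\<leftarrow>inner_nodes N \<gamma>. if act N s then sqrt 2 else 1)"

definition path_ind :: "'k net \<Rightarrow> (nat \<Rightarrow> real) \<Rightarrow> 'k weights \<Rightarrow> 'k edge list \<Rightarrow> real" where
  "path_ind N x w \<gamma> = (if \<forall>(s, j)\<in>set (inner_nodes N \<gamma>). act N s \<longrightarrow> node_val N x w s j > 0
     then 1 else 0)"

definition path_weight :: "'k weights \<Rightarrow> 'k edge list \<Rightarrow> real" where
  "path_weight w \<gamma> = (\<Prod>e\<leftarrow>\<gamma>. eweight w e)"

definition uses_mat :: "'k \<Rightarrow> 'k edge list \<Rightarrow> bool" where
  "uses_mat k \<gamma> \<longleftrightarrow> (\<exists>j i. WE k j i \<in> set \<gamma>)"

definition path_fk :: "'k net \<Rightarrow> (nat \<Rightarrow> real) \<Rightarrow> 'k \<Rightarrow> 'k weights \<Rightarrow> real" where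
  "path_fk N x k w = (\<Sum>\<gamma>\<in>{\<gamma>. is_path N \<gamma> \<and> uses_mat k \<gamma>}.
      path_const N x \<gamma> * path_ind N x w \<gamma> * path_weight w \<gamma>)"

definition weight_coords :: "'k net \<Rightarrow> ('k \<times> nat \<times> nat) set" where
  "weight_coords N = {(k, j, i). k \<in> mats N \<and> j < dim N (mdst N k) \<and> i < dim N (msrc N k)}"

definition gauss_weights :: "'k net \<Rightarrow> 'k weights measure" where
  "gauss_weights N = PiM (weight_coords N) (\<lambda>_. density lborel std_normal_density)"

text \<open>Partial derivative w.r.t. one weight entry (where it exists).\<close>
definition pderiv_w :: "('k weights \<Rightarrow> real) \<Rightarrow> 'k weights \<Rightarrow> 'k \<times> nat \<times> nat \<Rightarrow> real" where
  "pderiv_w F w c = deriv (\<lambda>t. F (w(c := t))) (w c)"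

definition frob_grad :: "'k net \<Rightarrow> ('k weights \<Rightarrow> real) \<Rightarrow> 'k \<Rightarrow> 'k weights \<Rightarrow> real" where
  "frob_grad N F k w = sqrt (\<Sum>j<dim N (mdst N k). \<Sum>i<dim N (msrc N k). (pderiv_w F w (k, j, i))\<^sup>2)"

text \<open>Matrix labels: W1 l is W^l, W2 l h is W^{l,h}.\<close>
datatype lbl = W1 nat | W2 nat nat

text \<open>Vanilla net, input dimension d, widths n 0..n L.  Stage 1 = y^0,
 stage l+1 (1<=l<=L) = pre-activation of layer l (its ReLU output is y^l),
 stage L+2 = f.\<close>
definition vanilla_net :: "nat \<Rightarrow> (nat \<Rightarrow> nat) \<Rightarrow> nat \<Rightarrow> lbl net" where
  "vanilla_net d n L = \<lparr> nst = L + 2,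
     dim = (\<lambda>s. if s = 0 then d else if s = L + 2 then 1 else n (s - 1)),
     act = (\<lambda>s. 2 \<le> s \<and> s \<le> L + 1),
     mats = W1 ` {0..L+1},
     msrc = (\<lambda>k. case k of W1 l \<Rightarrow> l | W2 _ _ \<Rightarrow> 0),
     mdst = (\<lambda>k. case k of W1 l \<Rightarrow> l + 1 | W2 _ _ \<Rightarrow> 0),
     mcoef = (\<lambda>k. case k of W1 l \<Rightarrow> (if l = 0 then 1 / sqrt (n 0) else 1 / sqrt (n (l - 1)))
                          | W2 _ _ \<Rightarrow> 0),
     skips = [] \<rparr>"

text \<open>ResNet, input dimension d, width n0 of all y^l (forced equal by the skip
 connections), intermediate widths nn (l-1) h of y^{l-1,h} for 1<=h<m, block depth m,
 block scalings alpha l.  Stage 1 = y^0; stage 1+(l-1)(m+1)+h = y^{l-1,h} (1<=h<=m),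
 stage 1+l(m+1) = y^l; stage 2+L(m+1) = f.\<close>
definition res_ystage :: "nat \<Rightarrow> nat \<Rightarrow> nat" where
  "res_ystage m l = 1 + l * (m + 1)"

definition res_hstage :: "nat \<Rightarrow> nat \<Rightarrow> nat \<Rightarrow> nat" where
  "res_hstage m l h = 1 + (l - 1) * (m + 1) + h"

definition resnet_net :: "nat \<Rightarrow> nat \<Rightarrow> (nat \<Rightarrow> nat \<Rightarrow> nat) \<Rightarrow> nat \<Rightarrow> (nat \<Rightarrow> real) \<Rightarrow> nat \<Rightarrow> lbl net" where
  "resnet_net d n0 nn m \<alpha> L = \<lparr> nst = 2 + L * (m + 1),
     dim = (\<lambda>s. if s = 0 then d else if s = 2 + L * (m + 1) then 1
               else (let r = (s - 1) mod (m + 1); b = (s - 1) div (m + 1) in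
                     if r = 0 \<or> r = m then n0 else nn b r)),
     act = (\<lambda>s. s \<noteq> 0 \<and> s \<noteq> 2 + L * (m + 1) \<and> (s - 1) mod (m + 1) \<noteq> 0
                \<and> (s - 1) mod (m + 1) < m),
     mats = {W1 0, W1 L} \<union> {W2 l h | l h. 1 \<le> l \<and> l \<le> L \<and> 1 \<le> h \<and> h \<le> m},
     msrc = (\<lambda>k. case k of W1 l \<Rightarrow> (if l = 0 then 0 else res_ystage m L)
                 | W2 l h \<Rightarrow> (if h = 1 then res_ystage m (l - 1) else res_hstage m l (h - 1))),
     mdst = (\<lambda>k. case k of W1 l \<Rightarrow> (if l = 0 then 1 else 2 + L * (m + 1))
                 | W2 l h \<Rightarrow> res_hstage m l h),
     mcoef = (\<lambda>k. case k of W1 l \<Rightarrow> 1 / sqrt n0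
                 | W2 l h \<Rightarrow> (if h = 1 then 1 / sqrt n0 else 1 / sqrt (nn (l - 1) (h - 1)))),
     skips = concat (map (\<lambda>l. [(res_ystage m (l - 1), res_ystage m l, 1),
                                (res_hstage m l m, res_ystage m l, sqrt (\<alpha> l))]) [1..<L+1]) \<rparr>"

text \<open>DenseNet, input dimension d, widths n 0..n L.  Stage h+1 = y^h (0<=h<=L),
 fed through its ReLU (q^h) for h<L; stage L+2 = f.\<close>
definition densenet_net :: "nat \<Rightarrow> (nat \<Rightarrow> nat) \<Rightarrow> real \<Rightarrow> nat \<Rightarrow> lbl net" where
  "densenet_net d n \<alpha> L = \<lparr> nst = L + 2,
     dim = (\<lambda>s. if s = 0 then d else if s = L + 2 then 1 else n (s - 1)),
     act = (\<lambda>s. 1 \<le> s \<and> s \<le> L),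
     mats = {W1 0, W1 L} \<union> {W2 l h | l h. 1 \<le> l \<and> l \<le> L \<and> h < l},
     msrc = (\<lambda>k. case k of W1 l \<Rightarrow> (if l = 0 then 0 else L + 1) | W2 l h \<Rightarrow> h + 1),
     mdst = (\<lambda>k. case k of W1 l \<Rightarrow> (if l = 0 then 1 else L + 2) | W2 l h \<Rightarrow> l + 1),
     mcoef = (\<lambda>k. case k of W1 l \<Rightarrow> (if l = 0 then 1 / sqrt (n 0) else 1 / sqrt (n L))
                 | W2 l h \<Rightarrow> sqrt (\<alpha> / (n (l - 1) * l))),
     skips = [] \<rparr>"

end

theory Submission
  imports Defs "HOL-Computational_Algebra.Polynomial"
begin

text \<open>By the path decomposition, \<open>f = f\<^sub>k + g\<close> where \<open>g\<close> collects the paths avoiding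
  \<open>W\<^sup>k\<close>. Along a coordinate line \<open>t \<mapsto> w(c := t)\<close> every pre-activation is continuous and
  polynomial off a countable set, so off a countable set of \<open>t\<close> its sign is locally constant;
  by Fubini, for almost every \<open>w\<close> all ReLU indicators are locally constant in each entry of
  \<open>W\<^sup>k\<close>. There \<open>g\<close> is locally constant in these entries, so \<open>f\<close> and \<open>f\<^sub>k\<close> have the same
  partial derivatives with respect to \<open>W\<^sup>k\<close>, hence almost surely the same Frobenius norm.\<close>

section \<open>Piecewise polynomial functions of one variable\<close>

lemma countable_isolated_points:
  fixes S :: "real set"
  shows "countable {t \<in> S. \<not> t islimpt S}"
proof -
  define I where "I a b = {t \<in> S. a < t \<and> t < b \<and> (\<forall>t'\<in>S. a < t' \<and> t' < b \<longrightarrow> t' = t)}" for a b :: real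
  have "countable (I a b)" for a b
  proof (cases "I a b = {}")
    case False
    then obtain t where "t \<in> I a b" by blast
    then have "I a b \<subseteq> {t}" unfolding I_def by blast
    then show ?thesis by (rule countable_subset) simp
  qed simp
  then have "countable (\<Union>(a, b)\<in>\<rat> \<times> \<rat>. I a b)"
    by (intro countable_UN countable_SIGMA countable_rat) auto
  moreover have "{t \<in> S. \<not> t islimpt S} \<subseteq> (\<Union>(a, b)\<in>\<rat> \<times> \<rat>. I a b)"
  proof
    fix t assume "t \<in> {t \<in> S. \<not> t islimpt S}"
    then obtain e where e: "0 < e" "\<And>t'. t' \<in> S \<Longrightarrow> t' \<noteq> t \<Longrightarrow> e \<le> \<bar>t' - t\<bar>" and "t \<in> S"
      unfolding islimpt_approachable_real by (auto simp: not_less)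
    obtain a where a: "a \<in> \<rat>" "t - e < a" "a < t" using Rats_dense_in_real[of "t - e" t] e(1) by auto
    obtain b where b: "b \<in> \<rat>" "t < b" "b < t + e" using Rats_dense_in_real[of t "t + e"] e(1) by auto
    have "t' = t" if "t' \<in> S" "a < t'" "t' < b" for t'
      using e(2)[OF that(1)] that a b by fastforce
    then have "t \<in> I a b" unfolding I_def using \<open>t \<in> S\<close> a b by blast
    then show "t \<in> (\<Union>(a, b)\<in>\<rat> \<times> \<rat>. I a b)" using a b by blast
  qed
  ultimately show ?thesis by (rule countable_subset[rotated])
qed

definition piecewise_poly :: "(real \<Rightarrow> real) \<Rightarrow> bool" where
  "piecewise_poly g \<longleftrightarrow> continuous_on UNIV g \<and>
     (\<exists>F. countable F \<and> (\<forall>t. t \<notin> F \<longrightarrow> (\<exists>P. \<forall>\<^sub>F t' in nhds t. g t' = poly P t')))"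

lemma piecewise_polyI:
  assumes "continuous_on UNIV g" "countable F"
    and "\<And>t. t \<notin> F \<Longrightarrow> \<exists>P. \<forall>\<^sub>F t' in nhds t. g t' = poly P t'"
  shows "piecewise_poly g"
  using assms unfolding piecewise_poly_def by blast

lemma piecewise_poly_const [simp]: "piecewise_poly (\<lambda>_. c)"
  by (rule piecewise_polyI[of _ "{}"]) (auto intro!: exI[of _ "[:c:]"])

lemma piecewise_poly_id [simp]: "piecewise_poly (\<lambda>t. t)"
  by (rule piecewise_polyI[of _ "{}"]) (auto intro!: exI[of _ "[:0, 1:]"] continuous_on_id)

lemma piecewise_poly_binop:
  assumes "piecewise_poly f" "piecewise_poly g" "continuous_on UNIV (\<lambda>t. h (f t) (g t))"
    and poly_closed: "\<And>P Q. \<exists>R. \<forall>t. h (poly P t) (poly Q t) = poly R t"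
  shows "piecewise_poly (\<lambda>t. h (f t) (g t))"
proof -
  obtain F where F: "countable F" "\<And>t. t \<notin> F \<Longrightarrow> \<exists>P. \<forall>\<^sub>F t' in nhds t. f t' = poly P t'"
    using assms(1) unfolding piecewise_poly_def by blast
  obtain G where G: "countable G" "\<And>t. t \<notin> G \<Longrightarrow> \<exists>Q. \<forall>\<^sub>F t' in nhds t. g t' = poly Q t'"
    using assms(2) unfolding piecewise_poly_def by blast
  show ?thesis
  proof (rule piecewise_polyI[OF assms(3)])
    show "countable (F \<union> G)" using F G by simp
    fix t assume "t \<notin> F \<union> G"
    then obtain P Q where fP: "\<forall>\<^sub>F t' in nhds t. f t' = poly P t'" and gQ: "\<forall>\<^sub>F t' in nhds t. g t' = poly Q t'"
      using F G by blast
    obtain R where R: "\<forall>t. h (poly P t) (poly Q t) = poly R t" using poly_closed by blast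
    from fP gQ have "\<forall>\<^sub>F t' in nhds t. h (f t') (g t') = poly R t'"
      by eventually_elim (simp add: R)
    then show "\<exists>R. \<forall>\<^sub>F t' in nhds t. h (f t') (g t') = poly R t'" ..
  qed
qed

lemma piecewise_poly_add [simp]:
  assumes "piecewise_poly f" "piecewise_poly g"
  shows "piecewise_poly (\<lambda>t. f t + g t)"
proof (rule piecewise_poly_binop[OF assms])
  show "continuous_on UNIV (\<lambda>t. f t + g t)"
    using assms unfolding piecewise_poly_def by (simp add: continuous_on_add)
  show "\<exists>R. \<forall>t. poly P t + poly Q t = poly R t" for P Q by (metis poly_add)
qed

lemma piecewise_poly_mult [simp]:
  assumes "piecewise_poly f" "piecewise_poly g"
  shows "piecewise_poly (\<lambda>t. f t * g t)"
proof (rule piecewise_poly_binop[OF assms])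
  show "continuous_on UNIV (\<lambda>t. f t * g t)"
    using assms unfolding piecewise_poly_def by (simp add: continuous_on_mult)
  show "\<exists>R. \<forall>t. poly P t * poly Q t = poly R t" for P Q by (metis poly_mult)
qed

lemma piecewise_poly_if [simp]:
  "piecewise_poly f \<Longrightarrow> piecewise_poly g \<Longrightarrow> piecewise_poly (\<lambda>t. if b then f t else g t)"
  by (cases b) simp_all

lemma piecewise_poly_sum:
  "(\<And>i. i \<in> S \<Longrightarrow> piecewise_poly (f i)) \<Longrightarrow> piecewise_poly (\<lambda>t. \<Sum>i\<in>S. f i t)"
  by (induction S rule: infinite_finite_induct) simp_all

lemma piecewise_poly_sum_list:
  "(\<And>i. i \<in> set xs \<Longrightarrow> piecewise_poly (\<lambda>t. f t i)) \<Longrightarrow> piecewise_poly (\<lambda>t. \<Sum>i\<leftarrow>xs. f t i)"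
  by (induction xs) simp_all

lemma eventually_poly_nonzero_at:
  fixes P :: "real poly"
  assumes "P \<noteq> 0"
  shows "\<forall>\<^sub>F t' in at t. poly P t' \<noteq> 0"
  using islimpt_finite[OF poly_roots_finite[OF assms], of t]
  unfolding islimpt_iff_eventually by simp

lemma eventually_pos_continuous:
  fixes g :: "real \<Rightarrow> real"
  assumes "continuous_on UNIV g" "0 < g t"
  shows "\<forall>\<^sub>F t' in nhds t. 0 < g t'"
  using eventually_nhds_in_open[OF open_Collect_less[OF continuous_on_const assms(1)]] assms(2)
  by simp

lemma eventually_neg_continuous:
  fixes g :: "real \<Rightarrow> real"
  assumes "continuous_on UNIV g" "g t < 0"
  shows "\<forall>\<^sub>F t' in nhds t. g t' < 0"
  using eventually_nhds_in_open[OF open_Collect_less[OF assms(1) continuous_on_const]] assms(2)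
  by simp

text \<open>A zero at which a piecewise polynomial function is a nonzero polynomial is isolated.\<close>
lemma piecewise_poly_locally_sign_constant:
  assumes "piecewise_poly g"
  obtains E where "countable E"
    and "\<And>t. t \<notin> E \<Longrightarrow> (\<forall>\<^sub>F t' in nhds t. 0 < g t') \<or> (\<forall>\<^sub>F t' in nhds t. g t' \<le> 0)"
proof -
  obtain F where cont: "continuous_on UNIV g" and F: "countable F"
    and loc: "\<And>t. t \<notin> F \<Longrightarrow> \<exists>P. \<forall>\<^sub>F t' in nhds t. g t' = poly P t'"
    using assms unfolding piecewise_poly_def by blast
  define Z where "Z = {t. g t = 0}"
  show ?thesis
  proof
    show "countable (F \<union> {t \<in> Z. \<not> t islimpt Z})"
      using F countable_isolated_points by simp
    fix t assume t: "t \<notin> F \<union> {t \<in> Z. \<not> t islimpt Z}"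
    consider "0 < g t" | "g t < 0" | "g t = 0" by linarith
    then show "(\<forall>\<^sub>F t' in nhds t. 0 < g t') \<or> (\<forall>\<^sub>F t' in nhds t. g t' \<le> 0)"
    proof cases
      case 1
      then show ?thesis using eventually_pos_continuous[OF cont] by blast
    next
      case 2
      then have "\<forall>\<^sub>F t' in nhds t. g t' < 0" by (rule eventually_neg_continuous[OF cont])
      then show ?thesis by (simp add: eventually_mono)
    next
      case 3
      obtain P where P: "\<forall>\<^sub>F t' in nhds t. g t' = poly P t'" using loc t by blast
      have "P = 0"
      proof (rule ccontr)
        assume "P \<noteq> 0"
        have "\<forall>\<^sub>F t' in at t. g t' = poly P t'"
          using P unfolding eventually_at_filter by (simp add: eventually_mono)
        with eventually_poly_nonzero_at[OF \<open>P \<noteq> 0\<close>] have "\<forall>\<^sub>F t' in at t. t' \<notin> Z"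
          unfolding Z_def by eventually_elim simp
        then show False using t 3 unfolding Z_def islimpt_iff_eventually by simp
      qed
      then show ?thesis using P by (simp add: eventually_mono)
    qed
  qed
qed

lemma piecewise_poly_relu [simp]:
  assumes "piecewise_poly g"
  shows "piecewise_poly (\<lambda>t. relu (g t))"
proof -
  obtain F where cont: "continuous_on UNIV g" and F: "countable F"
    and loc: "\<And>t. t \<notin> F \<Longrightarrow> \<exists>P. \<forall>\<^sub>F t' in nhds t. g t' = poly P t'"
    using assms unfolding piecewise_poly_def by blast
  obtain E where E: "countable E"
    and sign: "\<And>t. t \<notin> E \<Longrightarrow> (\<forall>\<^sub>F t' in nhds t. 0 < g t') \<or> (\<forall>\<^sub>F t' in nhds t. g t' \<le> 0)"
    using piecewise_poly_locally_sign_constant[OF assms] by blast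
  show ?thesis
  proof (rule piecewise_polyI)
    show "continuous_on UNIV (\<lambda>t. relu (g t))" unfolding relu_def using cont by (intro continuous_intros)
    show "countable (F \<union> E)" using F E by simp
    fix t assume t: "t \<notin> F \<union> E"
    then obtain P where P: "\<forall>\<^sub>F t' in nhds t. g t' = poly P t'" using loc by blast
    from sign t consider "\<forall>\<^sub>F t' in nhds t. 0 < g t'" | "\<forall>\<^sub>F t' in nhds t. g t' \<le> 0"
      by blast
    then show "\<exists>R. \<forall>\<^sub>F t' in nhds t. relu (g t') = poly R t'"
    proof cases
      case 1
      with P have "\<forall>\<^sub>F t' in nhds t. relu (g t') = poly P t'"
        by eventually_elim (simp add: relu_def)
      then show ?thesis ..
    next
      case 2
      then show ?thesis by (intro exI[of _ 0]) (simp add: eventually_mono relu_def)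
    qed
  qed
qed

lemma countable_sign_changes:
  assumes "piecewise_poly g"
  shows "countable {t. \<not> (\<forall>\<^sub>F t' in nhds t. (0 < g t') = (0 < g t))}"
proof -
  obtain E where E: "countable E"
    and sign: "\<And>t. t \<notin> E \<Longrightarrow> (\<forall>\<^sub>F t' in nhds t. 0 < g t') \<or> (\<forall>\<^sub>F t' in nhds t. g t' \<le> 0)"
    using piecewise_poly_locally_sign_constant[OF assms] by blast
  have "\<forall>\<^sub>F t' in nhds t. (0 < g t') = (0 < g t)" if "t \<notin> E" for t
    using sign[OF that]
  proof
    assume pos: "\<forall>\<^sub>F t' in nhds t. 0 < g t'"
    then show ?thesis using eventually_nhds_x_imp_x[OF pos] by (simp add: eventually_mono)
  next
    assume nonpos: "\<forall>\<^sub>F t' in nhds t. g t' \<le> 0"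
    then show ?thesis using eventually_nhds_x_imp_x[OF nonpos] by (simp add: eventually_mono not_less)
  qed
  then show ?thesis by (auto intro: countable_subset[OF _ E])
qed

text \<open>The rational form makes the set of sign changes measurable as a set of weights.\<close>
lemma sign_change_iff_rat:
  fixes g :: "real \<Rightarrow> real"
  assumes cont: "continuous_on UNIV g"
  shows "\<not> (\<forall>\<^sub>F t' in nhds t. (0 < g t') = (0 < g t)) \<longleftrightarrow>
         g t \<le> 0 \<and> (\<forall>n::nat. \<exists>q::rat. \<bar>of_rat q - t\<bar> < 1 / Suc n \<and> 0 < g (of_rat q))"
proof
  assume change: "\<not> (\<forall>\<^sub>F t' in nhds t. (0 < g t') = (0 < g t))"
  have "g t \<le> 0"
  proof (rule ccontr)
    assume "\<not> g t \<le> 0"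
    then have "\<forall>\<^sub>F t' in nhds t. (0 < g t') = (0 < g t)"
      using eventually_pos_continuous[OF cont, of t] by (simp add: eventually_mono)
    then show False using change by blast
  qed
  moreover have "\<exists>q::rat. \<bar>of_rat q - t\<bar> < 1 / Suc n \<and> 0 < g (of_rat q)" for n :: nat
  proof (rule ccontr)
    assume no_rat: "\<nexists>q::rat. \<bar>of_rat q - t\<bar> < 1 / Suc n \<and> 0 < g (of_rat q)"
    have "g t' \<le> 0" if t': "\<bar>t' - t\<bar> < 1 / Suc n" for t'
    proof (rule ccontr)
      assume "\<not> g t' \<le> 0"
      moreover have "\<forall>\<^sub>F u in nhds t'. u \<in> ball t (1 / Suc n)"
        using t' by (intro eventually_nhds_in_open) (auto simp: dist_real_def)
      ultimately have "\<forall>\<^sub>F u in nhds t'. 0 < g u \<and> \<bar>u - t\<bar> < 1 / Suc n"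
        using eventually_pos_continuous[OF cont, of t']
        by (auto simp: dist_real_def abs_minus_commute intro: eventually_conj)
      then obtain r where r: "0 < r" "\<And>u. \<bar>u - t'\<bar> < r \<Longrightarrow> 0 < g u \<and> \<bar>u - t\<bar> < 1 / Suc n"
        unfolding eventually_nhds_metric dist_real_def by blast
      obtain u where "u \<in> \<rat>" "t' - r < u" "u < t' + r" using Rats_dense_in_real[of "t' - r" "t' + r"] r(1) by auto
      then obtain q :: rat where "u = of_rat q" by (auto elim: Rats_cases)
      with \<open>t' - r < u\<close> \<open>u < t' + r\<close> have "0 < g (of_rat q) \<and> \<bar>of_rat q - t\<bar> < 1 / Suc n"
        by (intro r(2)) simp
      then show False using no_rat by blast
    qed
    then have "\<forall>\<^sub>F t' in nhds t. g t' \<le> 0"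
      unfolding eventually_nhds_metric dist_real_def by (intro exI[of _ "1 / Suc n"]) auto
    then have "\<forall>\<^sub>F t' in nhds t. (0 < g t') = (0 < g t)"
      using \<open>g t \<le> 0\<close> by (simp add: not_less)
    then show False using change by blast
  qed
  ultimately show "g t \<le> 0 \<and> (\<forall>n::nat. \<exists>q::rat. \<bar>of_rat q - t\<bar> < 1 / Suc n \<and> 0 < g (of_rat q))" by blast
next
  assume "g t \<le> 0 \<and> (\<forall>n::nat. \<exists>q::rat. \<bar>of_rat q - t\<bar> < 1 / Suc n \<and> 0 < g (of_rat q))"
  then have le: "g t \<le> 0" and rat: "\<And>n::nat. \<exists>q::rat. \<bar>of_rat q - t\<bar> < 1 / Suc n \<and> 0 < g (of_rat q)"
    by blast+
  show "\<not> (\<forall>\<^sub>F t' in nhds t. (0 < g t') = (0 < g t))"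
  proof
    assume "\<forall>\<^sub>F t' in nhds t. (0 < g t') = (0 < g t)"
    then obtain e where e: "0 < e" "\<And>t'. \<bar>t' - t\<bar> < e \<Longrightarrow> g t' \<le> 0"
      using le unfolding eventually_nhds_metric dist_real_def by force
    obtain n :: nat where "1 / Suc n < e" using nat_approx_posE[OF e(1)] by metis
    moreover obtain q :: rat where "\<bar>of_rat q - t\<bar> < 1 / Suc n" "0 < g (of_rat q)" using rat by blast
    ultimately show False using e(2)[of "of_rat q"] by linarith
  qed
qed

section \<open>Path decomposition\<close>

lemma vals_eq_node_val: "s \<le> T \<Longrightarrow> vals N x w T s j = node_val N x w s j"
proof (induction T)
  case (Suc T)
  then show ?case by (cases "s = Suc T") (simp_all add: node_val_def)
qed (simp add: node_val_def)

definition paths_to :: "'k net \<Rightarrow> nat \<Rightarrow> nat \<Rightarrow> 'k edge list set" where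
  "paths_to N t j = {\<gamma>. \<gamma> \<noteq> [] \<and> (\<forall>e\<in>set \<gamma>. edge_ok N e) \<and> fst (esrc N (hd \<gamma>)) = 0
     \<and> edst N (last \<gamma>) = (t, j) \<and> (\<forall>i. Suc i < length \<gamma> \<longrightarrow> edst N (\<gamma> ! i) = esrc N (\<gamma> ! Suc i))}"

definition path_term :: "'k net \<Rightarrow> (nat \<Rightarrow> real) \<Rightarrow> 'k weights \<Rightarrow> 'k edge list \<Rightarrow> real" where
  "path_term N x w \<gamma> = path_const N x \<gamma> * path_ind N x w \<gamma> * path_weight w \<gamma>"

lemma is_path_iff_paths_to: "is_path N \<gamma> \<longleftrightarrow> \<gamma> \<in> paths_to N (nst N) 0"
  unfolding is_path_def paths_to_def by blast

lemma esrc_less_edst: "edge_ok N e \<Longrightarrow> fst (esrc N e) < fst (edst N e)"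
  by (cases e) auto

lemma esrc_less_dim: "edge_ok N e \<Longrightarrow> snd (esrc N e) < dim N (fst (esrc N e))"
  by (cases e) auto

lemma finite_edges:
  assumes "finite (mats N)"
  shows "finite {e. edge_ok N e}"
proof -
  have "{e. edge_ok N e} \<subseteq> (\<Union>k\<in>mats N. \<Union>j<dim N (mdst N k). \<Union>i<dim N (msrc N k). {WE k j i})
     \<union> (\<Union>r<length (skips N). \<Union>c<dim N (fst (skips N ! r)). {SE r c})"
  proof
    fix e assume "e \<in> {e. edge_ok N e}"
    then show "e \<in> (\<Union>k\<in>mats N. \<Union>j<dim N (mdst N k). \<Union>i<dim N (msrc N k). {WE k j i})
     \<union> (\<Union>r<length (skips N). \<Union>c<dim N (fst (skips N ! r)). {SE r c})"
      by (cases e) auto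
  qed
  then show ?thesis by (rule finite_subset) (simp add: assms)
qed

text \<open>Stages strictly increase along a path.\<close>
lemma length_paths_to:
  assumes "\<gamma> \<in> paths_to N t j"
  shows "length \<gamma> \<le> t"
proof -
  have ne: "\<gamma> \<noteq> []" and ok: "\<forall>e\<in>set \<gamma>. edge_ok N e" and hd: "fst (esrc N (hd \<gamma>)) = 0"
    and last: "edst N (last \<gamma>) = (t, j)"
    and chain: "\<And>i. Suc i < length \<gamma> \<Longrightarrow> edst N (\<gamma> ! i) = esrc N (\<gamma> ! Suc i)"
    using assms unfolding paths_to_def by auto
  have "i < length \<gamma> \<Longrightarrow> Suc i \<le> fst (edst N (\<gamma> ! i))" for i
  proof (induction i)
    case 0
    then show ?case using esrc_less_edst[of N "\<gamma> ! 0"] ok hd ne by (simp add: hd_conv_nth)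
  next
    case (Suc i)
    then show ?case using esrc_less_edst[of N "\<gamma> ! Suc i"] ok chain[of i] by simp
  qed
  from this[of "length \<gamma> - 1"] ne last show ?thesis by (simp add: last_conv_nth)
qed

lemma paths_to_nonempty: "\<gamma> \<in> paths_to N t j \<Longrightarrow> \<gamma> \<noteq> []"
  by (simp add: paths_to_def)

lemma paths_to_0: "paths_to N 0 j = {}"
  using length_paths_to[of _ N 0 j] paths_to_nonempty by fastforce

lemma finite_paths_to:
  assumes "finite (mats N)"
  shows "finite (paths_to N t j)"
proof -
  have "paths_to N t j \<subseteq> {\<gamma>. set \<gamma> \<subseteq> {e. edge_ok N e} \<and> length \<gamma> \<le> t}"
    using length_paths_to unfolding paths_to_def by blast
  then show ?thesis by (rule finite_subset) (rule finite_lists_length_le[OF finite_edges[OF assms]])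
qed

lemma snoc_in_paths_to:
  "\<gamma> @ [e] \<in> paths_to N t j \<longleftrightarrow>
     (if \<gamma> = [] then fst (esrc N e) = 0 else \<gamma> \<in> paths_to N (fst (esrc N e)) (snd (esrc N e)))
     \<and> edge_ok N e \<and> edst N e = (t, j)"
proof (cases "\<gamma> = []")
  case False
  have "(\<forall>i. Suc i < length (\<gamma> @ [e]) \<longrightarrow> edst N ((\<gamma> @ [e]) ! i) = esrc N ((\<gamma> @ [e]) ! Suc i)) \<longleftrightarrow>
        (\<forall>i. Suc i < length \<gamma> \<longrightarrow> edst N (\<gamma> ! i) = esrc N (\<gamma> ! Suc i)) \<and> edst N (last \<gamma>) = esrc N e"
    (is "?chain \<longleftrightarrow> _")
  proof safe
    fix i assume ?chain "Suc i < length \<gamma>"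
    then show "edst N (\<gamma> ! i) = esrc N (\<gamma> ! Suc i)" by (auto simp: nth_append dest: spec[of _ i])
  next
    assume ?chain
    then show "edst N (last \<gamma>) = esrc N e"
      using False by (auto simp: nth_append last_conv_nth dest: spec[of _ "length \<gamma> - 1"])
  next
    fix i assume "\<forall>i. Suc i < length \<gamma> \<longrightarrow> edst N (\<gamma> ! i) = esrc N (\<gamma> ! Suc i)"
      "edst N (last \<gamma>) = esrc N e" "Suc i < length (\<gamma> @ [e])"
    moreover have "i = length \<gamma> - 1" if "\<not> Suc i < length \<gamma>"
      using that \<open>Suc i < length (\<gamma> @ [e])\<close> by simp
    ultimately show "edst N ((\<gamma> @ [e]) ! i) = esrc N ((\<gamma> @ [e]) ! Suc i)"
      using False by (cases "Suc i < length \<gamma>") (auto simp: nth_append last_conv_nth)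
  qed
  then show ?thesis using False by (cases "esrc N e") (auto simp: paths_to_def)
qed (auto simp: paths_to_def)

lemma paths_to_ending_with:
  assumes "edge_ok N e" "edst N e = (t, j)" "esrc N e = (s, i)"
  shows "{\<gamma> \<in> paths_to N t j. last \<gamma> = e} =
           (if s = 0 then {[e]} else {}) \<union> (\<lambda>\<gamma>. \<gamma> @ [e]) ` paths_to N s i"
proof -
  have "\<gamma> \<in> paths_to N t j \<and> last \<gamma> = e \<longleftrightarrow> (s = 0 \<and> \<gamma> = [e]) \<or> (\<exists>\<gamma>'\<in>paths_to N s i. \<gamma> = \<gamma>' @ [e])"
    for \<gamma>
  proof (cases \<gamma> rule: rev_cases)
    case (snoc \<gamma>' e')
    then show ?thesis
      using assms paths_to_nonempty[of \<gamma>' N s i] by (auto simp: snoc_in_paths_to paths_to_0)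
  qed (auto simp: paths_to_def)
  then show ?thesis by auto
qed

lemma path_term_single: "path_term N x w [e] = x (snd (esrc N e)) * ecoef N e * eweight w e"
  by (simp add: path_term_def path_const_def path_ind_def path_weight_def inner_nodes_def)

lemma path_term_snoc:
  assumes "\<gamma> \<in> paths_to N s i"
  shows "path_term N x w (\<gamma> @ [e]) = path_term N x w \<gamma> *
     (ecoef N e * eweight w e * (if act N s then sqrt 2 * (if 0 < node_val N x w s i then 1 else 0) else 1))"
proof -
  have "\<gamma> \<noteq> []" "edst N (last \<gamma>) = (s, i)" using assms by (auto simp: paths_to_def)
  then have "inner_nodes N (\<gamma> @ [e]) = inner_nodes N \<gamma> @ [(s, i)]"
    by (cases \<gamma> rule: rev_cases) (auto simp: inner_nodes_def butlast_append)
  then show ?thesis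
    by (simp add: path_term_def path_const_def path_ind_def path_weight_def \<open>\<gamma> \<noteq> []\<close> algebra_simps)
qed

definition in_edges :: "'k net \<Rightarrow> nat \<Rightarrow> nat \<Rightarrow> 'k edge set" where
  "in_edges N t j = {e. edge_ok N e \<and> edst N e = (t, j)}"

lemma in_edges_eq:
  assumes skips_dim: "\<forall>(s, t', c)\<in>set (skips N). s < t' \<longrightarrow> dim N s = dim N t'" and j: "j < dim N t"
  shows "in_edges N t j =
           (\<lambda>(k, i). WE k j i) ` (SIGMA k:{k \<in> mats N. mdst N k = t \<and> msrc N k < t}. {..<dim N (msrc N k)})
           \<union> (\<lambda>r. SE r j) ` {r \<in> {..<length (skips N)}. fst (snd (skips N ! r)) = t \<and> fst (skips N ! r) < t}"
proof (intro set_eqI iffI)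
  fix e assume "e \<in> in_edges N t j"
  then show "e \<in> (\<lambda>(k, i). WE k j i) ` (SIGMA k:{k \<in> mats N. mdst N k = t \<and> msrc N k < t}. {..<dim N (msrc N k)})
           \<union> (\<lambda>r. SE r j) ` {r \<in> {..<length (skips N)}. fst (snd (skips N ! r)) = t \<and> fst (skips N ! r) < t}"
    by (cases e) (force simp: in_edges_def)+
next
  fix e assume "e \<in> (\<lambda>(k, i). WE k j i) ` (SIGMA k:{k \<in> mats N. mdst N k = t \<and> msrc N k < t}. {..<dim N (msrc N k)})
           \<union> (\<lambda>r. SE r j) ` {r \<in> {..<length (skips N)}. fst (snd (skips N ! r)) = t \<and> fst (skips N ! r) < t}"
  moreover have "dim N (fst (skips N ! r)) = dim N (fst (snd (skips N ! r)))"
    if "r < length (skips N)" "fst (skips N ! r) < fst (snd (skips N ! r))" for r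
    using that skips_dim nth_mem[OF that(1)] by (cases "skips N ! r") fastforce
  ultimately show "e \<in> in_edges N t j" using j by (auto simp: in_edges_def)
qed

lemma stage_lin_eq_sum_in_edges:
  assumes skips_dim: "\<forall>(s, t', c)\<in>set (skips N). s < t' \<longrightarrow> dim N s = dim N t'"
    and fin: "finite (mats N)" and j: "j < dim N t"
  shows "stage_lin N w ov t j =
           (\<Sum>e\<in>in_edges N t j. ecoef N e * eweight w e * ov (fst (esrc N e)) (snd (esrc N e)))"
proof -
  define K where "K = {k \<in> mats N. mdst N k = t \<and> msrc N k < t}"
  define R where "R = {r \<in> {..<length (skips N)}. fst (snd (skips N ! r)) = t \<and> fst (skips N ! r) < t}"
  let ?F = "\<lambda>e. ecoef N e * eweight w e * ov (fst (esrc N e)) (snd (esrc N e))"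
  have "finite K" using fin by (simp add: K_def)
  have "inj_on (\<lambda>(k, i). WE k j i) (SIGMA k:K. {..<dim N (msrc N k)})" by (auto simp: inj_on_def)
  then have "sum ?F ((\<lambda>(k, i). WE k j i) ` (SIGMA k:K. {..<dim N (msrc N k)}))
      = (\<Sum>(k, i)\<in>(SIGMA k:K. {..<dim N (msrc N k)}). ?F (WE k j i))"
    by (simp add: sum.reindex case_prod_beta')
  also have "\<dots> = (\<Sum>k\<in>K. \<Sum>i<dim N (msrc N k). ?F (WE k j i))"
    using \<open>finite K\<close> by (simp add: sum.Sigma)
  also have "\<dots> = (\<Sum>k\<in>mats N. if mdst N k = t \<and> msrc N k < t
        then mcoef N k * (\<Sum>i<dim N (msrc N k). w (k, j, i) * ov (msrc N k) i) else 0)"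
    using fin by (simp add: K_def sum.inter_filter sum_distrib_left mult.assoc cong: if_cong)
  finally have weights: "(\<Sum>k\<in>mats N. if mdst N k = t \<and> msrc N k < t
        then mcoef N k * (\<Sum>i<dim N (msrc N k). w (k, j, i) * ov (msrc N k) i) else 0)
      = sum ?F ((\<lambda>(k, i). WE k j i) ` (SIGMA k:K. {..<dim N (msrc N k)}))" ..
  have "(\<Sum>(s, t', c)\<leftarrow>skips N. if t' = t \<and> s < t then c * ov s j else 0)
      = (\<Sum>r<length (skips N). case skips N ! r of (s, t', c) \<Rightarrow> if t' = t \<and> s < t then c * ov s j else 0)"
    by (simp add: sum_list_sum_nth atLeast0LessThan)
  also have "\<dots> = (\<Sum>r\<in>R. ?F (SE r j))"
    unfolding R_def sum.inter_filter[OF finite_lessThan] by (rule sum.cong) (auto split: prod.split)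
  also have "\<dots> = sum ?F ((\<lambda>r. SE r j) ` R)"
    by (rule sum.reindex[symmetric, unfolded comp_def]) (auto simp: inj_on_def)
  finally have skips: "(\<Sum>(s, t', c)\<leftarrow>skips N. if t' = t \<and> s < t then c * ov s j else 0)
      = sum ?F ((\<lambda>r. SE r j) ` R)" .
  from \<open>finite K\<close> show ?thesis
    unfolding stage_lin_def in_edges_eq[OF skips_dim j] K_def[symmetric] R_def[symmetric] weights skips
    by (subst sum.union_disjoint) (auto simp: R_def)
qed

lemma sum_path_term_snoc:
  "(\<Sum>\<gamma>\<in>paths_to N s i. path_term N x w (\<gamma> @ [e])) = (\<Sum>\<gamma>\<in>paths_to N s i. path_term N x w \<gamma>) *
     (ecoef N e * eweight w e * (if act N s then sqrt 2 * (if 0 < node_val N x w s i then 1 else 0) else 1))"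
  by (simp add: path_term_snoc sum_distrib_right)

theorem node_val_eq_sum_paths:
  assumes input_linear: "\<not> act N 0"
    and skips_dim: "\<forall>(s, t', c)\<in>set (skips N). s < t' \<longrightarrow> dim N s = dim N t'"
    and fin: "finite (mats N)"
  shows "0 < t \<Longrightarrow> j < dim N t \<Longrightarrow> node_val N x w t j = (\<Sum>\<gamma>\<in>paths_to N t j. path_term N x w \<gamma>)"
proof (induction t arbitrary: j rule: less_induct)
  case (less t)
  obtain T where T: "t = Suc T" using less.prems by (cases t) auto
  let ?out = "stage_out N (vals N x w T)"
  have "node_val N x w t j = (\<Sum>e\<in>in_edges N t j. ecoef N e * eweight w e * ?out (fst (esrc N e)) (snd (esrc N e)))"
    using stage_lin_eq_sum_in_edges[OF skips_dim fin less.prems(2)] by (simp add: node_val_def T)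
  also have "\<dots> = (\<Sum>e\<in>in_edges N t j. \<Sum>\<gamma>\<in>{\<gamma> \<in> paths_to N t j. last \<gamma> = e}. path_term N x w \<gamma>)"
  proof (rule sum.cong[OF refl])
    fix e assume "e \<in> in_edges N t j"
    then have ok: "edge_ok N e" and dst: "edst N e = (t, j)" by (auto simp: in_edges_def)
    obtain s i where src: "esrc N e = (s, i)" by fastforce
    have "s < t" "i < dim N s" using esrc_less_edst[OF ok] esrc_less_dim[OF ok] src dst by auto
    then have out: "?out s i = (if act N s then sqrt 2 * relu (node_val N x w s i) else node_val N x w s i)"
      using T by (simp add: stage_out_def vals_eq_node_val)
    show "ecoef N e * eweight w e * ?out (fst (esrc N e)) (snd (esrc N e))
        = (\<Sum>\<gamma>\<in>{\<gamma> \<in> paths_to N t j. last \<gamma> = e}. path_term N x w \<gamma>)"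
    proof (cases "s = 0")
      case True
      then show ?thesis
        using out input_linear src
        by (simp add: paths_to_ending_with[OF ok dst src] paths_to_0 path_term_single node_val_def)
    next
      case False
      then have "node_val N x w s i = (\<Sum>\<gamma>\<in>paths_to N s i. path_term N x w \<gamma>)"
        using less.IH \<open>s < t\<close> \<open>i < dim N s\<close> by simp
      moreover have "inj_on (\<lambda>\<gamma>. \<gamma> @ [e]) (paths_to N s i)" by (auto simp: inj_on_def)
      ultimately show ?thesis
        using out src False
        by (simp add: paths_to_ending_with[OF ok dst src] sum.reindex sum_path_term_snoc relu_def max_def)
    qed
  qed
  also have "\<dots> = (\<Sum>\<gamma>\<in>paths_to N t j. path_term N x w \<gamma>)"
  proof (rule sum.group)
    show "finite (paths_to N t j)" by (rule finite_paths_to[OF fin])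
    show "finite (in_edges N t j)" using finite_edges[OF fin] by (rule finite_subset[rotated]) (auto simp: in_edges_def)
    show "last ` paths_to N t j \<subseteq> in_edges N t j" by (auto simp: paths_to_def in_edges_def)
  qed
  finally show ?case .
qed

definition well_formed_net :: "'k net \<Rightarrow> bool" where
  "well_formed_net N \<longleftrightarrow> finite (mats N) \<and> \<not> act N 0
     \<and> (\<forall>(s, t, c)\<in>set (skips N). s < t \<longrightarrow> dim N s = dim N t) \<and> 0 < nst N \<and> 0 < dim N (nst N)"

lemma net_out_eq_sum_paths:
  "well_formed_net N \<Longrightarrow> net_out N x w = (\<Sum>\<gamma>\<in>paths_to N (nst N) 0. path_term N x w \<gamma>)"
  unfolding well_formed_net_def net_out_def by (elim conjE) (rule node_val_eq_sum_paths)

lemma path_fk_eq_sum_paths: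
  "path_fk N x k w = (\<Sum>\<gamma>\<in>{\<gamma> \<in> paths_to N (nst N) 0. uses_mat k \<gamma>}. path_term N x w \<gamma>)"
  by (simp add: path_fk_def path_term_def is_path_iff_paths_to)

section \<open>Activation patterns are almost surely locally constant\<close>

lemma piecewise_poly_vals: "piecewise_poly (\<lambda>t. vals N x (w(c := t)) T s j)"
proof (induction T arbitrary: s j)
  case (Suc T)
  have out: "piecewise_poly (\<lambda>t. stage_out N (vals N x (w(c := t)) T) s' i)" for s' i
    unfolding stage_out_def by (cases "act N s'") (simp_all add: Suc.IH)
  have weight: "piecewise_poly (\<lambda>t. (w(c := t)) c')" for c'
    by (cases "c' = c") simp_all
  have "piecewise_poly (\<lambda>t. stage_lin N (w(c := t)) (stage_out N (vals N x (w(c := t)) T)) (Suc T) j)"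
    unfolding stage_lin_def
    by (intro piecewise_poly_add piecewise_poly_sum piecewise_poly_sum_list)
       (auto simp: out weight piecewise_poly_sum split: prod.split)
  then show ?case unfolding vals.simps by (rule piecewise_poly_if[OF _ Suc.IH])
qed simp

lemma piecewise_poly_node_val: "piecewise_poly (\<lambda>t. node_val N x (w(c := t)) s j)"
  unfolding node_val_def by (rule piecewise_poly_vals)

lemma borel_measurable_vals:
  assumes "\<And>c. (\<lambda>\<omega>. W \<omega> c) \<in> borel_measurable M"
  shows "(\<lambda>\<omega>. vals N x (W \<omega>) T s j) \<in> borel_measurable M"
proof (induction T arbitrary: s j)
  case (Suc T)
  have [measurable]: "(\<lambda>\<omega>. stage_out N (vals N x (W \<omega>) T) s' i) \<in> borel_measurable M" for s' i
    unfolding stage_out_def relu_def using Suc.IH by measurable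
  have [measurable]: "(\<lambda>\<omega>. W \<omega> c) \<in> borel_measurable M" for c by (rule assms)
  have "(\<lambda>\<omega>. \<Sum>(s, t', c)\<leftarrow>xs. if t' = Suc T \<and> s < Suc T then c * stage_out N (vals N x (W \<omega>) T) s j else 0)
          \<in> borel_measurable M" for xs
    by (induction xs) (auto split: prod.split)
  then have "(\<lambda>\<omega>. stage_lin N (W \<omega>) (stage_out N (vals N x (W \<omega>) T)) (Suc T) j) \<in> borel_measurable M"
    unfolding stage_lin_def by measurable
  then show ?case using Suc.IH by simp
qed simp

lemma null_sets_PiM_if_null_sections:
  assumes "product_sigma_finite M" "finite I" "c \<in> I" "B \<in> sets (PiM I M)"
    and sections: "\<And>v. AE y in M c. v(c := y) \<notin> B"
  shows "B \<in> null_sets (PiM I M)"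
proof -
  define J where "J = I - {c}"
  have I: "I = insert c J" "c \<notin> J" "finite J" using assms(2,3) by (auto simp: J_def)
  have inner: "(\<integral>\<^sup>+ y. indicator B (v(c := y)) \<partial>M c) = 0" for v
  proof -
    have "AE y in M c. indicator B (v(c := y)) = (0::ennreal)"
      using sections[of v] by (rule eventually_mono) simp
    then show ?thesis by (simp add: nn_integral_cong_AE)
  qed
  have "emeasure (PiM I M) B = (\<integral>\<^sup>+ w. indicator B w \<partial>PiM (insert c J) M)"
    using assms(4) I(1) by simp
  also have "\<dots> = (\<integral>\<^sup>+ v. (\<integral>\<^sup>+ y. indicator B (v(c := y)) \<partial>M c) \<partial>PiM J M)"
    using assms(4) I by (intro product_sigma_finite.product_nn_integral_insert[OF assms(1)]) simp_all
  finally show ?thesis using assms(4) inner by (simp add: null_sets_def)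
qed

lemma AE_not_in_countable_density_lborel:
  assumes "f \<in> borel_measurable lborel" "countable C"
  shows "AE y in density lborel f. y \<notin> C"
proof -
  have "AE y in lborel. y \<notin> C" by (rule AE_not_in[OF countable_imp_null_set_lborel[OF assms(2)]])
  then have "AE y in lborel. 0 < f y \<longrightarrow> y \<notin> C" by (rule eventually_mono) simp
  then show ?thesis by (simp add: AE_density[OF assms(1)])
qed

lemma product_sigma_finite_std_normal:
  "product_sigma_finite (\<lambda>_. density lborel std_normal_density)"
  by (intro product_sigma_finite.intro prob_space_imp_sigma_finite prob_space_normal_density) simp

lemma borel_measurable_weight [measurable]: "(\<lambda>w. w c) \<in> borel_measurable (gauss_weights N)"
proof (cases "c \<in> weight_coords N")
  case True
  have "(\<lambda>w. w c) \<in> measurable (gauss_weights N) (density lborel std_normal_density)"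
    unfolding gauss_weights_def by (rule measurable_component_singleton[OF True])
  moreover have "measurable (gauss_weights N) (density lborel std_normal_density) = borel_measurable (gauss_weights N)"
    by (rule measurable_cong_sets) simp_all
  ultimately show ?thesis by simp
next
  case False
  have "w c = undefined" if "w \<in> space (gauss_weights N)" for w
  proof -
    from that have "w \<in> PiE (weight_coords N) (\<lambda>_. space (density lborel std_normal_density))"
      by (simp add: gauss_weights_def space_PiM)
    from PiE_arb[OF this False] show ?thesis .
  qed
  moreover have "(\<lambda>_. undefined :: real) \<in> borel_measurable (gauss_weights N)" by simp
  ultimately show ?thesis
    using measurable_cong[of "gauss_weights N" "\<lambda>w. w c" "\<lambda>_. undefined" borel] by blast
qed

lemma borel_measurable_node_val [measurable]:
  "(\<lambda>w. node_val N x w s j) \<in> borel_measurable (gauss_weights N)"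
  unfolding node_val_def by (rule borel_measurable_vals) simp

lemma borel_measurable_node_val_upd [measurable]:
  "(\<lambda>w. node_val N x (w(c := t)) s j) \<in> borel_measurable (gauss_weights N)"
proof -
  have "(\<lambda>w. (w(c := t)) c') \<in> borel_measurable (gauss_weights N)" for c'
    by (cases "c' = c") simp_all
  then show ?thesis unfolding node_val_def by (rule borel_measurable_vals)
qed

definition node_sign_stable :: "'k net \<Rightarrow> (nat \<Rightarrow> real) \<Rightarrow> 'k \<times> nat \<times> nat \<Rightarrow> nat \<Rightarrow> nat \<Rightarrow> 'k weights \<Rightarrow> bool" where
  "node_sign_stable N x c s j w \<longleftrightarrow>
     (\<forall>\<^sub>F t in nhds (w c). (0 < node_val N x (w(c := t)) s j) = (0 < node_val N x w s j))"

lemma sets_not_node_sign_stable: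
  "{w \<in> space (gauss_weights N). \<not> node_sign_stable N x c s j w} \<in> sets (gauss_weights N)"
proof -
  have cont: "continuous_on UNIV (\<lambda>t. node_val N x (w(c := t)) s j)" for w
    using piecewise_poly_node_val unfolding piecewise_poly_def by blast
  have "Measurable.pred (gauss_weights N) (\<lambda>w. node_val N x w s j \<le> 0 \<and>
      (\<forall>n::nat. \<exists>q::rat. \<bar>of_rat q - w c\<bar> < 1 / Suc n \<and> 0 < node_val N x (w(c := of_rat q)) s j))"
    by measurable
  moreover have "\<not> node_sign_stable N x c s j w \<longleftrightarrow> node_val N x w s j \<le> 0 \<and>
      (\<forall>n::nat. \<exists>q::rat. \<bar>of_rat q - w c\<bar> < 1 / Suc n \<and> 0 < node_val N x (w(c := of_rat q)) s j)" for w
    using sign_change_iff_rat[OF cont[of w], of "w c"] by (simp add: node_sign_stable_def)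
  ultimately show ?thesis by (simp add: pred_def)
qed

lemma AE_node_sign_stable:
  assumes "finite (mats N)" "c \<in> weight_coords N"
  shows "AE w in gauss_weights N. node_sign_stable N x c s j w"
proof -
  let ?B = "{w \<in> space (gauss_weights N). \<not> node_sign_stable N x c s j w}"
  have "AE y in density lborel std_normal_density. v(c := y) \<notin> ?B" for v
  proof -
    have "countable {y. \<not> node_sign_stable N x c s j (v(c := y))}"
      using countable_sign_changes[OF piecewise_poly_node_val[of N x v c s j]]
      by (simp add: node_sign_stable_def)
    then have "AE y in density lborel std_normal_density. y \<notin> {y. \<not> node_sign_stable N x c s j (v(c := y))}"
      by (intro AE_not_in_countable_density_lborel) simp_all
    then show ?thesis by (rule eventually_mono) simp
  qed
  moreover have "finite (weight_coords N)"
  proof (rule finite_subset)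
    show "weight_coords N \<subseteq> (SIGMA k:mats N. {..<dim N (mdst N k)} \<times> {..<dim N (msrc N k)})"
      by (auto simp: weight_coords_def)
  qed (use assms(1) in auto)
  ultimately have "?B \<in> null_sets (gauss_weights N)"
    unfolding gauss_weights_def
    by (intro null_sets_PiM_if_null_sections[OF product_sigma_finite_std_normal _ assms(2)])
       (auto simp: sets_not_node_sign_stable[unfolded gauss_weights_def])
  then show ?thesis by (rule AE_I') auto
qed

section \<open>Partial derivatives with respect to \<open>W\<^sup>k\<close>\<close>

lemma deriv_eventually_eq_add_const:
  fixes f g :: "real \<Rightarrow> real"
  assumes "\<forall>\<^sub>F t in nhds x. f t = g t + K"
  shows "deriv f x = deriv g x"
proof -
  have "DERIV f x :> D \<longleftrightarrow> DERIV (\<lambda>t. g t + K) x :> D" for D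
    by (rule DERIV_cong_ev[OF refl assms refl])
  moreover have "DERIV (\<lambda>t. g t + K) x :> D \<longleftrightarrow> DERIV g x :> D" for D
  proof
    assume "DERIV (\<lambda>t. g t + K) x :> D"
    from DERIV_diff[OF this DERIV_const[of K]] show "DERIV g x :> D" by simp
  next
    assume "DERIV g x :> D"
    from DERIV_add[OF this DERIV_const[of K]] show "DERIV (\<lambda>t. g t + K) x :> D" by simp
  qed
  ultimately show ?thesis unfolding deriv_def by simp
qed

lemma path_weight_upd:
  "\<not> uses_mat k \<gamma> \<Longrightarrow> path_weight (w((k, a, b) := t)) \<gamma> = path_weight w \<gamma>"
proof -
  assume "\<not> uses_mat k \<gamma>"
  then have "eweight (w((k, a, b) := t)) e = eweight w e" if "e \<in> set \<gamma>" for e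
    using that by (cases e) (auto simp: uses_mat_def)
  then have "map (eweight (w((k, a, b) := t))) \<gamma> = map (eweight w) \<gamma>" by (rule map_cong[OF refl])
  then show ?thesis unfolding path_weight_def by (rule arg_cong)
qed

lemma path_term_eventually_const:
  assumes "\<not> uses_mat k \<gamma>" and stable: "\<And>s j. node_sign_stable N x (k, a, b) s j w"
  shows "\<forall>\<^sub>F t in nhds (w (k, a, b)). path_term N x (w((k, a, b) := t)) \<gamma> = path_term N x w \<gamma>"
proof -
  have "\<forall>\<^sub>F t in nhds (w (k, a, b)). \<forall>y\<in>set (inner_nodes N \<gamma>).
          (0 < node_val N x (w((k, a, b) := t)) (fst y) (snd y)) = (0 < node_val N x w (fst y) (snd y))"
    using stable by (intro eventually_ball_finite) (auto simp: node_sign_stable_def)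
  then show ?thesis
    by (rule eventually_mono) (simp add: path_term_def path_ind_def path_weight_upd[OF assms(1)] split_beta)
qed

lemma pderiv_net_out_eq_pderiv_path_fk:
  assumes wf: "well_formed_net N" and stable: "\<And>s j. node_sign_stable N x (k, a, b) s j w"
  shows "pderiv_w (net_out N x) w (k, a, b) = pderiv_w (path_fk N x k) w (k, a, b)"
proof -
  define P where "P = paths_to N (nst N) 0"
  have "finite P" using wf finite_paths_to by (auto simp: P_def well_formed_net_def)
  have split: "net_out N x w' = path_fk N x k w' + (\<Sum>\<gamma>\<in>P - {\<gamma> \<in> P. uses_mat k \<gamma>}. path_term N x w' \<gamma>)"
    for w'
    unfolding net_out_eq_sum_paths[OF wf] path_fk_eq_sum_paths P_def[symmetric]
    using sum.subset_diff[of "{\<gamma> \<in> P. uses_mat k \<gamma>}" P "path_term N x w'"] \<open>finite P\<close> by simp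
  have "\<forall>\<^sub>F t in nhds (w (k, a, b)). \<forall>\<gamma>\<in>P - {\<gamma> \<in> P. uses_mat k \<gamma>}.
          path_term N x (w((k, a, b) := t)) \<gamma> = path_term N x w \<gamma>"
    using \<open>finite P\<close> stable by (intro eventually_ball_finite ballI path_term_eventually_const) auto
  then have "\<forall>\<^sub>F t in nhds (w (k, a, b)). net_out N x (w((k, a, b) := t))
      = path_fk N x k (w((k, a, b) := t)) + (\<Sum>\<gamma>\<in>P - {\<gamma> \<in> P. uses_mat k \<gamma>}. path_term N x w \<gamma>)"
    by (rule eventually_mono) (simp add: split[of "w((k, a, b) := _)"])
  then show ?thesis unfolding pderiv_w_def by (rule deriv_eventually_eq_add_const)
qed

theorem nn_integral_frob_grad_net_out_eq_path_fk:
  assumes wf: "well_formed_net N" and k: "k \<in> mats N"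
  shows "(\<integral>\<^sup>+ w. ennreal (frob_grad N (net_out N x) k w powr p) \<partial>gauss_weights N)
       = (\<integral>\<^sup>+ w. ennreal (frob_grad N (path_fk N x k) k w powr p) \<partial>gauss_weights N)"
proof (rule nn_integral_cong_AE)
  have "AE w in gauss_weights N. (k, a, b) \<in> weight_coords N \<longrightarrow> node_sign_stable N x (k, a, b) s j w"
    for a b s j
    using wf AE_node_sign_stable[of N "(k, a, b)" x s j]
    by (cases "(k, a, b) \<in> weight_coords N") (simp_all add: well_formed_net_def)
  then have "AE w in gauss_weights N. \<forall>a b s j. (k, a, b) \<in> weight_coords N \<longrightarrow> node_sign_stable N x (k, a, b) s j w"
    by (simp add: AE_all_countable)
  then show "AE w in gauss_weights N. ennreal (frob_grad N (net_out N x) k w powr p)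
      = ennreal (frob_grad N (path_fk N x k) k w powr p)"
  proof (rule eventually_mono)
    fix w assume stable: "\<forall>a b s j. (k, a, b) \<in> weight_coords N \<longrightarrow> node_sign_stable N x (k, a, b) s j w"
    have "pderiv_w (net_out N x) w (k, a, b) = pderiv_w (path_fk N x k) w (k, a, b)"
      if "a < dim N (mdst N k)" "b < dim N (msrc N k)" for a b
      using stable that k by (intro pderiv_net_out_eq_pderiv_path_fk[OF wf]) (simp add: weight_coords_def)
    then show "ennreal (frob_grad N (net_out N x) k w powr p) = ennreal (frob_grad N (path_fk N x k) k w powr p)"
      by (simp add: frob_grad_def)
  qed
qed

section \<open>The three architectures\<close>

lemma well_formed_vanilla_net: "well_formed_net (vanilla_net d n L)"
  by (simp add: well_formed_net_def vanilla_net_def)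

lemma well_formed_densenet_net: "well_formed_net (densenet_net d n \<alpha> L)"
proof -
  have "mats (densenet_net d n \<alpha> L) \<subseteq> {W1 0, W1 L} \<union> (\<lambda>(l, h). W2 l h) ` ({..L} \<times> {..L})"
    by (auto simp: densenet_net_def)
  then have "finite (mats (densenet_net d n \<alpha> L))" by (rule finite_subset) simp
  then show ?thesis by (simp add: well_formed_net_def densenet_net_def)
qed

lemma resnet_dim:
  "dim (resnet_net d n0 nn m \<alpha> L) s = (if s = 0 then d else if s = 2 + L * (m + 1) then 1
     else if (s - 1) mod (m + 1) = 0 \<or> (s - 1) mod (m + 1) = m then n0
     else nn ((s - 1) div (m + 1)) ((s - 1) mod (m + 1)))"
  unfolding resnet_net_def Let_def by (simp only: net.select_convs)

lemma resnet_dim_ystage: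
  assumes "l \<le> L"
  shows "dim (resnet_net d n0 nn m \<alpha> L) (res_ystage m l) = n0"
proof -
  have "res_ystage m l \<noteq> 2 + L * (m + 1)"
    using mult_le_mono1[OF assms, of "m + 1"] unfolding res_ystage_def by linarith
  moreover have "res_ystage m l \<noteq> 0" by (simp add: res_ystage_def)
  moreover have "res_ystage m l - 1 = l * (m + 1)" by (simp add: res_ystage_def)
  then have "(res_ystage m l - 1) mod (m + 1) = 0" by (simp only: mod_mult_self2_is_0)
  ultimately show ?thesis by (simp only: resnet_dim if_False if_True simp_thms)
qed

lemma resnet_dim_last_hstage:
  assumes "1 \<le> l" "l \<le> L"
  shows "dim (resnet_net d n0 nn m \<alpha> L) (res_hstage m l m) = n0"
proof -
  have "(l - 1) * (m + 1) + (m + 1) \<le> L * (m + 1)"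
    using mult_le_mono1[OF assms(2), of "m + 1"] assms(1) by (cases l) auto
  then have "res_hstage m l m \<noteq> 2 + L * (m + 1)" unfolding res_hstage_def by linarith
  moreover have "res_hstage m l m \<noteq> 0" by (simp add: res_hstage_def)
  moreover have "res_hstage m l m - 1 = (l - 1) * (m + 1) + m" by (simp add: res_hstage_def)
  then have "(res_hstage m l m - 1) mod (m + 1) = m" by (simp only: mod_mult_self3) simp
  ultimately show ?thesis by (simp only: resnet_dim if_False if_True simp_thms)
qed

lemma well_formed_resnet_net: "well_formed_net (resnet_net d n0 nn m \<alpha> L)"
proof -
  have "mats (resnet_net d n0 nn m \<alpha> L) \<subseteq> {W1 0, W1 L} \<union> (\<lambda>(l, h). W2 l h) ` ({..L} \<times> {..m})"
    by (auto simp: resnet_net_def)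
  then have "finite (mats (resnet_net d n0 nn m \<alpha> L))" by (rule finite_subset) simp
  moreover have "dim (resnet_net d n0 nn m \<alpha> L) s = dim (resnet_net d n0 nn m \<alpha> L) t"
    if "(s, t, c) \<in> set (skips (resnet_net d n0 nn m \<alpha> L))" for s t c
  proof -
    have "(s, t, c) \<in> (\<Union>l\<in>set [1..<L+1]. set [(res_ystage m (l - 1), res_ystage m l, 1),
        (res_hstage m l m, res_ystage m l, sqrt (\<alpha> l))])"
      using that unfolding resnet_net_def net.select_convs set_concat set_map by blast
    then obtain l where "1 \<le> l" "l \<le> L"
      and "(s, t) = (res_ystage m (l - 1), res_ystage m l) \<or> (s, t) = (res_hstage m l m, res_ystage m l)"
      by auto
    then show ?thesis using resnet_dim_ystage resnet_dim_last_hstage by auto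
  qed
  moreover have "\<not> act (resnet_net d n0 nn m \<alpha> L) 0" "0 < nst (resnet_net d n0 nn m \<alpha> L)"
    "0 < dim (resnet_net d n0 nn m \<alpha> L) (nst (resnet_net d n0 nn m \<alpha> L))"
    by (simp_all add: resnet_net_def)
  ultimately show ?thesis unfolding well_formed_net_def by fast
qed

theorem lemma3:
  fixes N :: "lbl net" and d L :: nat and x :: "nat \<Rightarrow> real" and k :: lbl and p :: real
  assumes arch:
    "(\<exists>n. (\<forall>l\<le>L. 0 < n l) \<and> N = vanilla_net d n L)
     \<or> (\<exists>n0 nn m \<alpha>. 0 < n0 \<and> 1 \<le> m \<and> (\<forall>l<L. \<forall>h. 1 \<le> h \<and> h < m \<longrightarrow> 0 < nn l h)
           \<and> (\<forall>l. 1 \<le> l \<and> l \<le> L \<longrightarrow> 0 < \<alpha> l) \<and> 1 \<le> L \<and> N = resnet_net d n0 nn m \<alpha> L)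
     \<or> (\<exists>n \<alpha>. (\<forall>l\<le>L. 0 < n l) \<and> 0 < \<alpha> \<and> 1 \<le> L \<and> N = densenet_net d n \<alpha> L)"
    and "0 < d"
    and x_nz: "\<exists>i<d. x i \<noteq> 0"
    and k: "k \<in> mats N"
    and p: "0 < p"
  shows "(\<integral>\<^sup>+ w. ennreal (frob_grad N (net_out N x) k w powr p) \<partial>gauss_weights N)
       = (\<integral>\<^sup>+ w. ennreal (frob_grad N (path_fk N x k) k w powr p) \<partial>gauss_weights N)"
proof -
  from arch have "well_formed_net N"
    by (elim disjE exE conjE)
      (simp_all add: well_formed_vanilla_net well_formed_resnet_net well_formed_densenet_net)
  then show ?thesis using k by (rule nn_integral_frob_grad_net_out_eq_path_fk)
qed

end
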